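(* Let $F=\{T_1,\dots,T_n\}$ be a finite family of reduction operators relative to a well-ordered set $(G,<)$. Then \[\mathrm{lt}(\mathrm{syz}(F))=\{e_{i,g_0}\mid 2\le i\le n\ \text{and}\ g_0\in\mathrm{red}(U_{i-1}\vee T_i)\},\] where $U_{i-1}=T_1\wedge\dots\wedge T_{i-1}$.
   Context: Let $\mathbb{K}$ be a field, $(G,<)$ a well-ordered set and $\mathbb{K}G$ the vector space with basis $G$. For $v\neq0$, $\mathrm{lt}(v)$ is the greatest element of $G$ appearing with nonzero coefficient in $v$. Extend $<$ to $\mathbb{K}G$: $u<v$ if $u=0$ and $v\neq0$, or if $\mathrm{lt}(u)<\mathrm{lt}(v)$; $u\le v$ means $u<v$ or $u=v$. A reduction operator is an idempotent linear endomorphism $T$ of $\mathbb{K}G$ with $T(g)\le g$ for all $g\in G$; $\mathrm{red}(T)=\{g\in G\mid T(g)\neq g\}$. For every subspace $V$ there is a unique reduction operator $\ker^{-1}(V)$ with kernel $V$; $T\wedge T'=\ker^{-1}(\ker T+\ker T')$, $T\vee T'=\ker^{-1}(\ker T\cap\ker T')$, and $T_1\wedge\dots\wedge T_k=\ker^{-1}(\sum\ker T_j)$; $\wedge F=T_1\wedge\dots\wedge T_n$. Let $\mathbf{ker}(F)=\ker T_1\times\dots\times\ker T_n$, $\pi_F(v_1,\dots,v_n)=v_1+\dots+v_n\in\ker(\wedge F)$ and $\mathrm{syz}(F)=\ker\pi_F$. For $g\in\mathrm{red}(T_i)$, $e_{i,g}$ is the tuple with $g-T_i(g)$ at position $i$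 and $0$ elsewhere; these form a basis of $\mathbf{ker}(F)$, well-ordered by $e_{i,g}\sqsubset e_{i',g'}$ iff $i<i'$, or $i=i'$ and $g<g'$. The leading term of a nonzero element of $\mathbf{ker}(F)$ is the $\sqsubset$-greatest $e_{i,g}$ appearing with nonzero coefficient in it, and $\mathrm{lt}(\mathrm{syz}(F))$ is the set of leading terms of nonzero elements of $\mathrm{syz}(F)$. *)

theory Defs
  imports "HOL-Library.Poly_Mapping"
begin

text \<open>The vector space KG with basis G is modelled by finitely supported
functions from G to K (G a well-ordered type, K a field).\<close>

definition basisv :: "'g \<Rightarrow> ('g \<Rightarrow>\<^sub>0 'k::field)" where
  "basisv g = Poly_Mapping.single g 1"

definition smultv :: "'k::field \<Rightarrow> ('g \<Rightarrow>\<^sub>0 'k) \<Rightarrow> ('g \<Rightarrow>\<^sub>0 'k)" where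
  "smultv c v = Poly_Mapping.map (\<lambda>x. c * x) v"

definition ltv :: "('g::wellorder \<Rightarrow>\<^sub>0 'k::field) \<Rightarrow> 'g" where
  "ltv v = Max (Poly_Mapping.keys v)"

definition vless :: "('g::wellorder \<Rightarrow>\<^sub>0 'k::field) \<Rightarrow> ('g \<Rightarrow>\<^sub>0 'k) \<Rightarrow> bool" where
  "vless u v \<longleftrightarrow> (u = 0 \<and> v \<noteq> 0) \<or> (u \<noteq> 0 \<and> v \<noteq> 0 \<and> ltv u < ltv v)"

definition vle :: "('g::wellorder \<Rightarrow>\<^sub>0 'k::field) \<Rightarrow> ('g \<Rightarrow>\<^sub>0 'k) \<Rightarrow> bool" where
  "vle u v \<longleftrightarrow> vless u v \<or> u = v"

definition linear_endo :: "(('g \<Rightarrow>\<^sub>0 'k::field) \<Rightarrow> ('g \<Rightarrow>\<^sub>0 'k)) \<Rightarrow> bool" where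
  "linear_endo T \<longleftrightarrow> (\<forall>u v. T (u + v) = T u + T v) \<and> (\<forall>c v. T (smultv c v) = smultv c (T v))"

definition reduction_operator :: "(('g::wellorder \<Rightarrow>\<^sub>0 'k::field) \<Rightarrow> ('g \<Rightarrow>\<^sub>0 'k)) \<Rightarrow> bool" where
  "reduction_operator T \<longleftrightarrow> linear_endo T \<and> (\<forall>v. T (T v) = T v) \<and>
     (\<forall>g. vle (T (basisv g)) (basisv g))"

definition red :: "(('g::wellorder \<Rightarrow>\<^sub>0 'k::field) \<Rightarrow> ('g \<Rightarrow>\<^sub>0 'k)) \<Rightarrow> 'g set" where
  "red T = {g. T (basisv g) \<noteq> basisv g}"

definition kernel :: "(('g \<Rightarrow>\<^sub>0 'k::field) \<Rightarrow> ('g \<Rightarrow>\<^sub>0 'k)) \<Rightarrow> ('g \<Rightarrow>\<^sub>0 'k) set" where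
  "kernel T = {v. T v = 0}"

definition ker_inv :: "('g::wellorder \<Rightarrow>\<^sub>0 'k::field) set \<Rightarrow> (('g \<Rightarrow>\<^sub>0 'k) \<Rightarrow> ('g \<Rightarrow>\<^sub>0 'k))" where
  "ker_inv V = (THE T. reduction_operator T \<and> kernel T = V)"

definition sum_kernels :: "(nat \<Rightarrow> (('g \<Rightarrow>\<^sub>0 'k::field) \<Rightarrow> ('g \<Rightarrow>\<^sub>0 'k))) \<Rightarrow> nat set \<Rightarrow> ('g \<Rightarrow>\<^sub>0 'k) set" where
  "sum_kernels T I = {v. \<exists>f. (\<forall>j\<in>I. f j \<in> kernel (T j)) \<and> v = (\<Sum>j\<in>I. f j)}"

definition meet_ops :: "(nat \<Rightarrow> (('g::wellorder \<Rightarrow>\<^sub>0 'k::field) \<Rightarrow> ('g \<Rightarrow>\<^sub>0 'k))) \<Rightarrow> nat set \<Rightarrow> (('g \<Rightarrow>\<^sub>0 'k) \<Rightarrow> ('g \<Rightarrow>\<^sub>0 'k))" where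
  "meet_ops T I = ker_inv (sum_kernels T I)"

definition join_op :: "(('g::wellorder \<Rightarrow>\<^sub>0 'k::field) \<Rightarrow> ('g \<Rightarrow>\<^sub>0 'k)) \<Rightarrow> (('g \<Rightarrow>\<^sub>0 'k) \<Rightarrow> ('g \<Rightarrow>\<^sub>0 'k)) \<Rightarrow> (('g \<Rightarrow>\<^sub>0 'k) \<Rightarrow> ('g \<Rightarrow>\<^sub>0 'k))" where
  "join_op S T = ker_inv (kernel S \<inter> kernel T)"

text \<open>Tuples (v_1,...,v_n) are functions nat \<Rightarrow> vector, zero outside 1..n.\<close>
definition kerF :: "(nat \<Rightarrow> (('g \<Rightarrow>\<^sub>0 'k::field) \<Rightarrow> ('g \<Rightarrow>\<^sub>0 'k))) \<Rightarrow> nat \<Rightarrow> (nat \<Rightarrow> ('g \<Rightarrow>\<^sub>0 'k)) set" where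
  "kerF T n = {v. (\<forall>j\<in>{1..n}. v j \<in> kernel (T j)) \<and> (\<forall>j. j \<notin> {1..n} \<longrightarrow> v j = 0)}"

definition syz :: "(nat \<Rightarrow> (('g \<Rightarrow>\<^sub>0 'k::field) \<Rightarrow> ('g \<Rightarrow>\<^sub>0 'k))) \<Rightarrow> nat \<Rightarrow> (nat \<Rightarrow> ('g \<Rightarrow>\<^sub>0 'k)) set" where
  "syz T n = {v \<in> kerF T n. (\<Sum>j\<in>{1..n}. v j) = 0}"

definition e_vec :: "(nat \<Rightarrow> (('g \<Rightarrow>\<^sub>0 'k::field) \<Rightarrow> ('g \<Rightarrow>\<^sub>0 'k))) \<Rightarrow> nat \<Rightarrow> 'g \<Rightarrow> (nat \<Rightarrow> ('g \<Rightarrow>\<^sub>0 'k))" where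
  "e_vec T i g = (\<lambda>j. if j = i then basisv g - T i (basisv g) else 0)"

definition sqsub :: "nat \<times> 'g::wellorder \<Rightarrow> nat \<times> 'g \<Rightarrow> bool" where
  "sqsub p q \<longleftrightarrow> fst p < fst q \<or> (fst p = fst q \<and> snd p < snd q)"

text \<open>c gives the coordinates of w in the basis e of ker(F)\<close>
definition coords :: "(nat \<Rightarrow> (('g::wellorder \<Rightarrow>\<^sub>0 'k::field) \<Rightarrow> ('g \<Rightarrow>\<^sub>0 'k))) \<Rightarrow> nat \<Rightarrow> (nat \<times> 'g \<Rightarrow> 'k) \<Rightarrow> (nat \<Rightarrow> ('g \<Rightarrow>\<^sub>0 'k)) \<Rightarrow> bool" where
  "coords T n c w \<longleftrightarrow> finite {p. c p \<noteq> 0} \<and>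
     {p. c p \<noteq> 0} \<subseteq> {(j, h). j \<in> {1..n} \<and> h \<in> red (T j)} \<and>
     w = (\<lambda>j. \<Sum>p\<in>{p. c p \<noteq> 0}. smultv (c p) (e_vec T (fst p) (snd p) j))"

definition lt_syz :: "(nat \<Rightarrow> (('g::wellorder \<Rightarrow>\<^sub>0 'k::field) \<Rightarrow> ('g \<Rightarrow>\<^sub>0 'k))) \<Rightarrow> nat \<Rightarrow> (nat \<Rightarrow> ('g \<Rightarrow>\<^sub>0 'k)) set" where
  "lt_syz T n = {e_vec T i g | i g. \<exists>w\<in>syz T n. (\<exists>j. w j \<noteq> 0) \<and> (\<exists>c. coords T n c w \<and> c (i, g) \<noteq> 0 \<and>
       (\<forall>p. c p \<noteq> 0 \<longrightarrow> p \<noteq> (i, g) \<longrightarrow> sqsub p (i, g)))}"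

end

theory Submission
  imports Defs "HOL.Vector_Spaces"
begin

(* For a reduction operator R, the vectors g - R(g) with g in red(R) are triangular (leading
   term g, coefficient 1) and span ker R, because v - R(v) is their combination with the
   coefficients of v.  Hence red(R) is exactly the set of leading terms of ker R, and the
   leading term of a nonzero w in ker(F), written in the basis e_{j,h}, is e_{i,lt(w_i)} where
   w_i is the last nonzero component.  For a syzygy, w_i = -(w_1 + ... + w_{i-1}) lies in
   (ker T_1 + ... + ker T_{i-1}) \<inter> ker T_i = ker(U_{i-1} \<or> T_i), which is 0 for i = 1;
   conversely every vector of this intersection is the last component of a syzygy.  So the
   leading terms are the e_{i,g0} with g0 a leading term of ker(U_{i-1} \<or> T_i), that is,
   g0 in red(U_{i-1} \<or> T_i).  The operator ker^{-1}(V) is obtained as the normal form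
   modulo V, which is well defined because every vector is congruent modulo V to a unique
   vector none of whose terms is a leading term of V. *)

abbreviation lookup :: "('a \<Rightarrow>\<^sub>0 'b::zero) \<Rightarrow> 'a \<Rightarrow> 'b" where
  "lookup \<equiv> Poly_Mapping.lookup"

abbreviation keys :: "('a \<Rightarrow>\<^sub>0 'b::zero) \<Rightarrow> 'a set" where
  "keys \<equiv> Poly_Mapping.keys"

lemma lookup_smultv [simp]: "lookup (smultv c v) k = c * lookup v k"
  by (simp add: smultv_def Poly_Mapping.map.rep_eq when_def)

lemma lookup_basisv: "lookup (basisv g) k = (if k = g then 1 else 0)"
  by (simp add: basisv_def lookup_single)

lemma keys_basisv [simp]: "keys (basisv g :: _ \<Rightarrow>\<^sub>0 'k::field) = {g}"
  by (simp add: basisv_def)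

lemma basisv_neq_zero [simp]: "basisv g \<noteq> (0 :: _ \<Rightarrow>\<^sub>0 'k::field)"
  using keys_basisv[of g, where 'k = 'k] by (metis empty_not_insert keys_zero)

lemma keys_smultv_subset: "keys (smultv c v) \<subseteq> keys v"
  by (auto simp: in_keys_iff)

interpretation KG: vector_space "smultv :: 'k::field \<Rightarrow> ('g \<Rightarrow>\<^sub>0 'k) \<Rightarrow> ('g \<Rightarrow>\<^sub>0 'k)"
  by unfold_locales (auto intro!: poly_mapping_eqI simp: lookup_add algebra_simps)

lemma linear_endo_module_hom: "linear_endo T \<Longrightarrow> module_hom smultv smultv T"
  unfolding linear_endo_def module_hom_def module_hom_axioms_def
  using KG.module_axioms by blast

lemma subspace_kernel: "linear_endo T \<Longrightarrow> KG.subspace (kernel T)"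
  using module_hom.subspace_kernel[OF linear_endo_module_hom] unfolding kernel_def .

lemma poly_mapping_basisv_expansion: "v = (\<Sum>h\<in>keys v. smultv (lookup v h) (basisv h))"
proof (rule poly_mapping_eqI)
  fix k
  have "lookup (\<Sum>h\<in>keys v. smultv (lookup v h) (basisv h)) k
      = (\<Sum>h\<in>keys v. if h = k then lookup v h else 0)"
    unfolding lookup_sum lookup_smultv lookup_basisv by (intro sum.cong) auto
  then show "lookup v k = lookup (\<Sum>h\<in>keys v. smultv (lookup v h) (basisv h)) k"
    by (simp add: in_keys_iff)
qed

lemma keys_diff_below:
  fixes u w :: "'g::linorder \<Rightarrow>\<^sub>0 'k::ab_group_add"
  assumes "keys u \<subseteq> {..g}" "keys w \<subseteq> {..g}" "lookup u g = lookup w g"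
  shows "keys (u - w) \<subseteq> {..<g}"
proof
  fix x
  assume x: "x \<in> keys (u - w)"
  then have "x \<le> g"
    using assms(1,2) keys_diff[of u w] by auto
  moreover have "x \<noteq> g"
    using x assms(3) by (auto simp: in_keys_iff lookup_minus)
  ultimately show "x \<in> {..<g}"
    by simp
qed

lemma ltv_in_keys: "v \<noteq> 0 \<Longrightarrow> ltv v \<in> keys v"
  unfolding ltv_def by (rule Max_in) auto

lemma le_ltv: "x \<in> keys v \<Longrightarrow> x \<le> ltv v"
  unfolding ltv_def by (rule Max_ge) auto

lemma ltv_eqI: "g \<in> keys v \<Longrightarrow> keys v \<subseteq> {..g} \<Longrightarrow> ltv v = g"
  unfolding ltv_def by (rule Max_eqI) auto

lemma ltv_basisv [simp]: "ltv (basisv g :: _ \<Rightarrow>\<^sub>0 'k::field) = g"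
  by (rule ltv_eqI) simp_all

definition lead_terms :: "('g::wellorder \<Rightarrow>\<^sub>0 'k::field) set \<Rightarrow> 'g set" where
  "lead_terms V = {ltv v | v. v \<in> V \<and> v \<noteq> 0}"

lemma ltv_sum_triangular:
  fixes b :: "'g::wellorder \<Rightarrow> ('g \<Rightarrow>\<^sub>0 'k::field)"
  assumes S: "finite S" "S \<noteq> {}"
    and b: "\<And>h. h \<in> S \<Longrightarrow> keys (b h) \<subseteq> {..h}" "\<And>h. h \<in> S \<Longrightarrow> lookup (b h) h = 1"
    and a: "\<And>h. h \<in> S \<Longrightarrow> a h \<noteq> 0"
  shows "(\<Sum>h\<in>S. smultv (a h) (b h)) \<noteq> 0" and "ltv (\<Sum>h\<in>S. smultv (a h) (b h)) = Max S"
proof -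
  define m where "m = Max S"
  have m: "m \<in> S" "\<And>h. h \<in> S \<Longrightarrow> h \<le> m"
    using S by (simp_all add: m_def)
  have "lookup (b h) m = 0" if "h \<in> S" "h \<noteq> m" for h
    using b(1)[of h] m(2)[of h] that by (force simp: in_keys_iff)
  then have "lookup (\<Sum>h\<in>S. smultv (a h) (b h)) m = (\<Sum>h\<in>S. if h = m then a h else 0)"
    unfolding lookup_sum lookup_smultv by (intro sum.cong) (auto simp: b(2))
  also have "\<dots> = a m"
    using S m by simp
  finally have m_key: "m \<in> keys (\<Sum>h\<in>S. smultv (a h) (b h))"
    using a[OF m(1)] by (simp add: in_keys_iff)
  then show "(\<Sum>h\<in>S. smultv (a h) (b h)) \<noteq> 0"
    by auto
  have "keys (\<Sum>h\<in>S. smultv (a h) (b h)) \<subseteq> {..m}"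
    using keys_sum[of "\<lambda>h. smultv (a h) (b h)" S] keys_smultv_subset b(1) m(2) by fastforce
  with m_key show "ltv (\<Sum>h\<in>S. smultv (a h) (b h)) = Max S"
    unfolding m_def by (rule ltv_eqI)
qed

definition kernel_basis :: "(('g \<Rightarrow>\<^sub>0 'k::field) \<Rightarrow> ('g \<Rightarrow>\<^sub>0 'k)) \<Rightarrow> 'g \<Rightarrow> ('g \<Rightarrow>\<^sub>0 'k)" where
  "kernel_basis R g = basisv g - R (basisv g)"

lemma diff_apply_eq_sum_kernel_basis:
  assumes "linear_endo R"
  shows "v - R v = (\<Sum>h\<in>keys v \<inter> red R. smultv (lookup v h) (kernel_basis R h))"
proof -
  interpret R: module_hom smultv smultv R
    using linear_endo_module_hom[OF assms] .
  have "v - R v = (\<Sum>h\<in>keys v. smultv (lookup v h) (kernel_basis R h))"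
    by (subst (1 2) poly_mapping_basisv_expansion)
      (simp add: R.sum R.scale kernel_basis_def KG.scale_right_diff_distrib sum_subtractf)
  also have "\<dots> = (\<Sum>h\<in>keys v \<inter> red R. smultv (lookup v h) (kernel_basis R h))"
    by (rule sum.mono_neutral_right) (auto simp: kernel_basis_def red_def)
  finally show ?thesis .
qed

context
  fixes R :: "('g::wellorder \<Rightarrow>\<^sub>0 'k::field) \<Rightarrow> ('g \<Rightarrow>\<^sub>0 'k)"
  assumes R: "reduction_operator R"
begin

lemma keys_apply_basisv_red:
  assumes "g \<in> red R"
  shows "keys (R (basisv g)) \<subseteq> {..<g}"
proof -
  have "vle (R (basisv g)) (basisv g)"
    using R by (simp add: reduction_operator_def)
  then have "R (basisv g) = 0 \<or> ltv (R (basisv g)) < g"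
    using assms by (auto simp: vle_def vless_def red_def)
  then show ?thesis
    using le_ltv[of _ "R (basisv g)"] by fastforce
qed

lemma keys_apply_basisv: "keys (R (basisv g)) \<subseteq> {..g}"
proof (cases "g \<in> red R")
  case True
  then show ?thesis
    using keys_apply_basisv_red[OF True] by fastforce
next
  case False
  then show ?thesis
    by (simp add: red_def)
qed

lemma keys_kernel_basis: "keys (kernel_basis R g) \<subseteq> {..g}"
  using keys_diff[of "basisv g" "R (basisv g)"] keys_apply_basisv[of g]
  unfolding kernel_basis_def keys_basisv by blast

lemma lookup_kernel_basis_self: "g \<in> red R \<Longrightarrow> lookup (kernel_basis R g) g = 1"
  using keys_apply_basisv_red[of g]
  by (auto simp: kernel_basis_def lookup_minus lookup_basisv in_keys_iff)

lemma apply_kernel_basis: "R (kernel_basis R g) = 0"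
  using R module_hom.diff[OF linear_endo_module_hom, of R]
  unfolding kernel_basis_def reduction_operator_def by simp

lemma ltv_sum_kernel_basis:
  assumes "S \<subseteq> red R" "finite S" "S \<noteq> {}" "\<And>h. h \<in> S \<Longrightarrow> a h \<noteq> 0"
  shows "(\<Sum>h\<in>S. smultv (a h) (kernel_basis R h)) \<noteq> 0"
    and "ltv (\<Sum>h\<in>S. smultv (a h) (kernel_basis R h)) = Max S"
  using ltv_sum_triangular[of S "kernel_basis R" a] assms keys_kernel_basis lookup_kernel_basis_self
  by blast+

lemma reduction_operator_linear: "linear_endo R"
  using R by (simp add: reduction_operator_def)

lemma kernel_eq_sum_kernel_basis:
  "R v = 0 \<Longrightarrow> v = (\<Sum>h\<in>keys v \<inter> red R. smultv (lookup v h) (kernel_basis R h))"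
  using diff_apply_eq_sum_kernel_basis[OF reduction_operator_linear, of v] by simp

lemma ltv_kernel_in_red:
  assumes "R v = 0" "v \<noteq> 0"
  shows "ltv v \<in> red R"
proof -
  let ?S = "keys v \<inter> red R"
  have v: "v = (\<Sum>h\<in>?S. smultv (lookup v h) (kernel_basis R h))"
    using kernel_eq_sum_kernel_basis[OF assms(1)] .
  then have "?S \<noteq> {}"
    using assms(2) by force
  then have "ltv v = Max ?S"
    using ltv_sum_kernel_basis(2)[of ?S "lookup v"] v by (auto simp: in_keys_iff)
  with \<open>?S \<noteq> {}\<close> show ?thesis
    using Max_in[of ?S] by auto
qed

lemma red_eq_lead_terms_kernel: "red R = lead_terms (kernel R)"
proof
  show "red R \<subseteq> lead_terms (kernel R)"
  proof
    fix g
    assume g: "g \<in> red R"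
    then have "g \<in> keys (kernel_basis R g)"
      by (simp add: lookup_kernel_basis_self in_keys_iff)
    then have "kernel_basis R g \<noteq> 0" "ltv (kernel_basis R g) = g"
      using ltv_eqI keys_kernel_basis by auto
    then show "g \<in> lead_terms (kernel R)"
      using apply_kernel_basis unfolding lead_terms_def kernel_def by force
  qed
  show "lead_terms (kernel R) \<subseteq> red R"
    using ltv_kernel_in_red unfolding lead_terms_def kernel_def by blast
qed

lemma keys_apply_disjoint_red: "keys (R u) \<inter> red R = {}"
proof (rule ccontr)
  \<comment> \<open>R u - R (R u) = 0 would be a nontrivial triangular combination of kernel basis vectors\<close>
  let ?S = "keys (R u) \<inter> red R"
  assume "?S \<noteq> {}"
  then have "(\<Sum>h\<in>?S. smultv (lookup (R u) h) (kernel_basis R h)) \<noteq> 0"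
    by (intro ltv_sum_kernel_basis(1)) (auto simp: in_keys_iff)
  moreover have "R u - R (R u) = 0"
    using R by (simp add: reduction_operator_def)
  ultimately show False
    using diff_apply_eq_sum_kernel_basis[OF reduction_operator_linear, of "R u"] by simp
qed

end

lemma eliminate_top_term:
  fixes V :: "('g::wellorder \<Rightarrow>\<^sub>0 'k::field) set"
  assumes V: "KG.subspace V" and u: "keys u \<subseteq> {..g}"
  obtains z where "keys (u - z) \<subseteq> {..<g}" "keys z \<subseteq> {..g}"
    and "z \<in> V \<or> keys z \<inter> lead_terms V = {}"
proof (cases "g \<in> lead_terms V")
  case True
  then obtain w where w: "w \<in> V" "w \<noteq> 0" "ltv w = g"
    unfolding lead_terms_def by blast
  then have "lookup w g \<noteq> 0"
    unfolding lookup_not_eq_zero_eq_in_keys using ltv_in_keys by blast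
  define z where "z = smultv (lookup u g / lookup w g) w"
  have "keys w \<subseteq> {..g}"
    unfolding w(3)[symmetric] using le_ltv by blast
  then have "keys z \<subseteq> {..g}"
    unfolding z_def by (rule order.trans[OF keys_smultv_subset])
  moreover have "lookup u g = lookup z g"
    using \<open>lookup w g \<noteq> 0\<close> by (simp add: z_def)
  moreover have "z \<in> V"
    unfolding z_def by (rule KG.subspace_scale[OF V w(1)])
  ultimately show ?thesis
    using keys_diff_below[OF u] that by blast
next
  case False
  define z where "z = smultv (lookup u g) (basisv g)"
  have "keys z \<subseteq> {g}"
    using keys_smultv_subset[of "lookup u g" "basisv g"] by (simp add: z_def)
  moreover have "lookup u g = lookup z g"
    by (simp add: z_def lookup_basisv)
  ultimately show ?thesis
    using keys_diff_below[OF u] that False by blast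
qed

lemma normal_form_exists_bounded:
  fixes V :: "('g::wellorder \<Rightarrow>\<^sub>0 'k::field) set"
  assumes V: "KG.subspace V" and "keys u \<subseteq> {..g}"
  shows "\<exists>r. u - r \<in> V \<and> keys r \<inter> lead_terms V = {} \<and> keys r \<subseteq> {..g}"
  using assms(2)
proof (induction g arbitrary: u rule: less_induct)
  case (less g)
  obtain z where z: "keys (u - z) \<subseteq> {..<g}" "keys z \<subseteq> {..g}"
    and z_cases: "z \<in> V \<or> keys z \<inter> lead_terms V = {}"
    using eliminate_top_term[OF V less.prems] .
  obtain r where r: "u - z - r \<in> V" "keys r \<inter> lead_terms V = {}" "keys r \<subseteq> {..<g}"
  proof (cases "u - z = 0")
    case True
    then show ?thesis
      using that[of 0] KG.subspace_0[OF V] by simp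
  next
    case False
    then have "ltv (u - z) < g"
      using z(1) ltv_in_keys by blast
    moreover have "keys (u - z) \<subseteq> {..ltv (u - z)}"
      using le_ltv by blast
    ultimately show ?thesis
      using less.IH that by fastforce
  qed
  from z_cases show ?case
  proof
    assume "z \<in> V"
    then have "(u - z - r) + z \<in> V"
      by (rule KG.subspace_add[OF V r(1)])
    then show ?case
      using r(2,3) by (intro exI[of _ r]) auto
  next
    assume z_free: "keys z \<inter> lead_terms V = {}"
    have "u - (r + z) \<in> V"
      using r(1) by (metis add.commute diff_diff_eq)
    moreover have "keys r \<subseteq> {..g}"
      using r(3) by (auto intro: less_imp_le)
    then have "keys (r + z) \<subseteq> {..g}" "keys (r + z) \<inter> lead_terms V = {}"
      using keys_add[of r z] z(2) r(2) z_free by blast+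
    ultimately show ?case
      by blast
  qed
qed

lemma normal_form_unique:
  assumes V: "KG.subspace V"
    and r: "u - r \<in> V" "keys r \<inter> lead_terms V = {}"
    and r': "u - r' \<in> V" "keys r' \<inter> lead_terms V = {}"
  shows "r = r'"
proof (rule ccontr)
  assume "r \<noteq> r'"
  then have "r' - r \<noteq> 0"
    by simp
  have "r' - r = (u - r) - (u - r')"
    by simp
  then have "r' - r \<in> V"
    using KG.subspace_diff[OF V r(1) r'(1)] by simp
  with \<open>r' - r \<noteq> 0\<close> have "ltv (r' - r) \<in> lead_terms V"
    unfolding lead_terms_def by blast
  moreover have "ltv (r' - r) \<in> keys r' \<union> keys r"
    using ltv_in_keys[OF \<open>r' - r \<noteq> 0\<close>] keys_diff[of r' r] by blast
  ultimately show False
    using r(2) r'(2) by blast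
qed

definition normal_form :: "('g::wellorder \<Rightarrow>\<^sub>0 'k::field) set \<Rightarrow> ('g \<Rightarrow>\<^sub>0 'k) \<Rightarrow> ('g \<Rightarrow>\<^sub>0 'k)" where
  "normal_form V u = (THE r. u - r \<in> V \<and> keys r \<inter> lead_terms V = {})"

lemma normal_form_eqI:
  assumes "KG.subspace V" "u - r \<in> V" "keys r \<inter> lead_terms V = {}"
  shows "normal_form V u = r"
  unfolding normal_form_def using assms normal_form_unique by (intro the_equality) blast+

lemma normal_form:
  assumes V: "KG.subspace V"
  shows "u - normal_form V u \<in> V" and "keys (normal_form V u) \<inter> lead_terms V = {}"
proof -
  have "keys u \<subseteq> {..ltv u}"
    using le_ltv by blast
  then obtain r where "u - r \<in> V" "keys r \<inter> lead_terms V = {}"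
    using normal_form_exists_bounded[OF V] by blast
  then show "u - normal_form V u \<in> V" "keys (normal_form V u) \<inter> lead_terms V = {}"
    using normal_form_eqI[OF V] by simp_all
qed

lemma linear_endo_normal_form:
  assumes V: "KG.subspace V"
  shows "linear_endo (normal_form V)"
  unfolding linear_endo_def
proof (intro conjI allI)
  fix u v c
  show "normal_form V (u + v) = normal_form V u + normal_form V v"
  proof (rule normal_form_eqI[OF V])
    have "(u + v) - (normal_form V u + normal_form V v) = (u - normal_form V u) + (v - normal_form V v)"
      by simp
    then show "(u + v) - (normal_form V u + normal_form V v) \<in> V"
      using KG.subspace_add[OF V normal_form(1)[OF V, of u] normal_form(1)[OF V, of v]] by (simp only:)
    show "keys (normal_form V u + normal_form V v) \<inter> lead_terms V = {}"
      using keys_add[of "normal_form V u" "normal_form V v"] normal_form(2)[OF V] by blast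
  qed
  show "normal_form V (smultv c v) = smultv c (normal_form V v)"
  proof (rule normal_form_eqI[OF V])
    have "smultv c v - smultv c (normal_form V v) = smultv c (v - normal_form V v)"
      by (simp add: KG.scale_right_diff_distrib)
    then show "smultv c v - smultv c (normal_form V v) \<in> V"
      using KG.subspace_scale[OF V normal_form(1)[OF V, of v]] by (simp only:)
    show "keys (smultv c (normal_form V v)) \<inter> lead_terms V = {}"
      using keys_smultv_subset[of c "normal_form V v"] normal_form(2)[OF V] by blast
  qed
qed

lemma vle_normal_form_basisv:
  assumes V: "KG.subspace V"
  shows "vle (normal_form V (basisv g)) (basisv g)"
proof (cases "g \<in> lead_terms V")
  case True
  obtain r where r: "basisv g - r \<in> V" "keys r \<inter> lead_terms V = {}" "keys r \<subseteq> {..g}"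
    using normal_form_exists_bounded[OF V, of "basisv g" g] by auto
  have "keys r \<subseteq> {..<g}"
    using r(2,3) True by fastforce
  then have "r = 0 \<or> ltv r < g"
    using ltv_in_keys by blast
  then show ?thesis
    using normal_form_eqI[OF V r(1,2)] by (auto simp: vle_def vless_def)
next
  case False
  then have "normal_form V (basisv g) = basisv g"
    using KG.subspace_0[OF V] by (intro normal_form_eqI[OF V]) auto
  then show ?thesis
    by (simp add: vle_def)
qed

lemma reduction_operator_normal_form:
  assumes V: "KG.subspace V"
  shows "reduction_operator (normal_form V)"
proof -
  have "normal_form V (normal_form V v) = normal_form V v" for v
    using V normal_form[OF V] KG.subspace_0[OF V] by (intro normal_form_eqI) simp_all
  then show ?thesis
    unfolding reduction_operator_def
    using linear_endo_normal_form[OF V] vle_normal_form_basisv[OF V] by blast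
qed

lemma kernel_normal_form:
  assumes V: "KG.subspace V"
  shows "kernel (normal_form V) = V"
proof (intro set_eqI iffI)
  fix v
  assume "v \<in> kernel (normal_form V)"
  then show "v \<in> V"
    using normal_form(1)[OF V, of v] by (simp add: kernel_def)
next
  fix v
  assume "v \<in> V"
  then show "v \<in> kernel (normal_form V)"
    using normal_form_eqI[OF V, of v 0] by (simp add: kernel_def)
qed

lemma ker_inv_eq_normal_form:
  assumes V: "KG.subspace V"
  shows "ker_inv V = normal_form V"
  unfolding ker_inv_def
proof (rule the_equality)
  show "reduction_operator (normal_form V) \<and> kernel (normal_form V) = V"
    using reduction_operator_normal_form[OF V] kernel_normal_form[OF V] ..
  fix R
  assume R: "reduction_operator R \<and> kernel R = V"
  show "R = normal_form V"
  proof
    fix u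
    have "R (u - R u) = 0"
      using R module_hom.diff[OF linear_endo_module_hom, of R] by (simp add: reduction_operator_def)
    then have "u - R u \<in> V"
      using R by (auto simp: kernel_def)
    moreover have "keys (R u) \<inter> lead_terms V = {}"
      using R keys_apply_disjoint_red red_eq_lead_terms_kernel by metis
    ultimately show "R u = normal_form V u"
      using normal_form_eqI[OF V] by metis
  qed
qed

lemma red_ker_inv:
  assumes V: "KG.subspace V"
  shows "red (ker_inv V) = lead_terms V"
  using red_eq_lead_terms_kernel[OF reduction_operator_normal_form[OF V]]
  by (simp add: V ker_inv_eq_normal_form kernel_normal_form)

lemma kernel_ker_inv: "KG.subspace V \<Longrightarrow> kernel (ker_inv V) = V"
  by (simp add: ker_inv_eq_normal_form kernel_normal_form)

lemma subspace_sum_kernels: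
  assumes lin: "\<And>j. j \<in> I \<Longrightarrow> linear_endo (T j)"
  shows "KG.subspace (sum_kernels T I)"
proof (rule KG.subspaceI)
  have "\<forall>j\<in>I. 0 \<in> kernel (T j)"
    using lin KG.subspace_0[OF subspace_kernel] by blast
  then show "0 \<in> sum_kernels T I"
    unfolding sum_kernels_def by (intro CollectI exI[of _ "\<lambda>_. 0"]) simp
next
  fix x y
  assume "x \<in> sum_kernels T I" "y \<in> sum_kernels T I"
  then obtain f f' where f: "\<forall>j\<in>I. f j \<in> kernel (T j)" "x = sum f I"
    and f': "\<forall>j\<in>I. f' j \<in> kernel (T j)" "y = sum f' I"
    unfolding sum_kernels_def by blast
  have "\<forall>j\<in>I. f j + f' j \<in> kernel (T j)"
    using lin f(1) f'(1) KG.subspace_add[OF subspace_kernel] by blast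
  then show "x + y \<in> sum_kernels T I"
    using f(2) f'(2) unfolding sum_kernels_def
    by (intro CollectI exI[of _ "\<lambda>j. f j + f' j"]) (simp add: sum.distrib)
next
  fix c x
  assume "x \<in> sum_kernels T I"
  then obtain f where f: "\<forall>j\<in>I. f j \<in> kernel (T j)" "x = sum f I"
    unfolding sum_kernels_def by blast
  have "\<forall>j\<in>I. smultv c (f j) \<in> kernel (T j)"
    using lin f(1) KG.subspace_scale[OF subspace_kernel] by blast
  then show "smultv c x \<in> sum_kernels T I"
    using f(2) unfolding sum_kernels_def
    by (intro CollectI exI[of _ "\<lambda>j. smultv c (f j)"]) (simp add: KG.scale_sum_right)
qed

lemma red_join_meet:
  assumes "\<And>j. j \<in> I \<Longrightarrow> linear_endo (T j)" and "linear_endo S"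
  shows "red (join_op (meet_ops T I) S) = lead_terms (sum_kernels T I \<inter> kernel S)"
proof -
  have U: "KG.subspace (sum_kernels T I)"
    using subspace_sum_kernels assms(1) .
  then have "kernel (meet_ops T I) = sum_kernels T I"
    unfolding meet_ops_def by (rule kernel_ker_inv)
  then show ?thesis
    unfolding join_op_def using red_ker_inv KG.subspace_inter[OF U subspace_kernel[OF assms(2)]]
    by simp
qed

lemma sum_e_vec_component:
  assumes "finite C"
  shows "(\<Sum>p\<in>C. smultv (c p) (e_vec T (fst p) (snd p) j))
       = (\<Sum>h\<in>{h. (j, h) \<in> C}. smultv (c (j, h)) (kernel_basis (T j) h))"
proof -
  have "(\<Sum>p\<in>C. smultv (c p) (e_vec T (fst p) (snd p) j))
      = (\<Sum>p\<in>{p\<in>C. fst p = j}. smultv (c p) (kernel_basis (T j) (snd p)))"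
    unfolding sum.inter_filter[OF assms]
    by (intro sum.cong) (auto simp: e_vec_def kernel_basis_def)
  also have "{p\<in>C. fst p = j} = Pair j ` {h. (j, h) \<in> C}"
    by auto
  finally show ?thesis
    by (subst (asm) sum.reindex) (auto simp: inj_on_def)
qed

lemma coords_component:
  assumes "coords T n c w"
  shows "w j = (\<Sum>h\<in>{h. c (j, h) \<noteq> 0}. smultv (c (j, h)) (kernel_basis (T j) h))"
  using assms sum_e_vec_component[of "{p. c p \<noteq> 0}" c T j] unfolding coords_def by simp

lemma coords_component_ltv:
  assumes T: "\<forall>i\<in>{1..n}. reduction_operator (T i)" and c: "coords T n c w"
  shows "finite {h. c (j, h) \<noteq> 0}"
    and "w j = 0 \<longleftrightarrow> (\<forall>h. c (j, h) = 0)"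
    and "w j \<noteq> 0 \<Longrightarrow> ltv (w j) = Max {h. c (j, h) \<noteq> 0}"
proof -
  let ?S = "{h. c (j, h) \<noteq> 0}"
  have supp: "finite {p. c p \<noteq> 0}" "{p. c p \<noteq> 0} \<subseteq> {(j, h). j \<in> {1..n} \<and> h \<in> red (T j)}"
    using c unfolding coords_def by blast+
  have "?S = Pair j -` {p. c p \<noteq> 0}" "inj (Pair j)"
    by (auto simp: inj_on_def)
  then show fin: "finite ?S"
    using finite_vimageI[OF supp(1)] by simp
  have lead: "w j \<noteq> 0 \<and> ltv (w j) = Max ?S" if "?S \<noteq> {}"
  proof -
    have "j \<in> {1..n}" and sub: "?S \<subseteq> red (T j)"
      using that supp(2) by auto
    then have "reduction_operator (T j)"
      using T by blast
    from ltv_sum_kernel_basis[OF this sub fin that]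
    show ?thesis
      unfolding coords_component[OF c, of j] by simp
  qed
  have empty: "w j = 0" if "?S = {}"
    using coords_component[OF c, of j] that by simp
  show "w j = 0 \<longleftrightarrow> (\<forall>h. c (j, h) = 0)"
    using lead empty by blast
  show "w j \<noteq> 0 \<Longrightarrow> ltv (w j) = Max ?S"
    using lead empty by blast
qed

lemma coords_exist:
  assumes T: "\<forall>i\<in>{1..n}. reduction_operator (T i)" and w: "w \<in> kerF T n"
  shows "\<exists>c. coords T n c w"
proof -
  define C where "C = Sigma {1..n} (\<lambda>j. keys (w j) \<inter> red (T j))"
  define c where "c p = (if p \<in> C then lookup (w (fst p)) (snd p) else 0)" for p
  have supp: "{p. c p \<noteq> 0} = C"
    by (auto simp: c_def C_def in_keys_iff)
  have component: "w j = (\<Sum>p\<in>C. smultv (c p) (e_vec T (fst p) (snd p) j))" for j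
  proof (cases "j \<in> {1..n}")
    case True
    then have "T j (w j) = 0"
      using w by (simp add: kerF_def kernel_def)
    then have "w j = (\<Sum>h\<in>keys (w j) \<inter> red (T j). smultv (lookup (w j) h) (kernel_basis (T j) h))"
      using T True kernel_eq_sum_kernel_basis by blast
    also have "\<dots> = (\<Sum>h\<in>{h. (j, h) \<in> C}. smultv (c (j, h)) (kernel_basis (T j) h))"
      using True by (intro sum.cong) (auto simp: C_def c_def)
    finally show ?thesis
      by (simp add: sum_e_vec_component C_def)
  next
    case False
    then have "w j = 0" "{h. (j, h) \<in> C} = {}"
      using w by (auto simp: kerF_def C_def)
    then show ?thesis
      by (simp add: sum_e_vec_component C_def)
  qed
  have "finite C" "C \<subseteq> {(j, h). j \<in> {1..n} \<and> h \<in> red (T j)}"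
    by (auto simp: C_def)
  moreover have "w = (\<lambda>j. \<Sum>p\<in>C. smultv (c p) (e_vec T (fst p) (snd p) j))"
    by (intro ext component)
  ultimately have "coords T n c w"
    unfolding coords_def supp by blast
  then show ?thesis
    by blast
qed

definition leading_index :: "(nat \<times> 'g::wellorder \<Rightarrow> 'k::zero) \<Rightarrow> nat \<times> 'g \<Rightarrow> bool" where
  "leading_index c p \<longleftrightarrow> c p \<noteq> 0 \<and> (\<forall>q. c q \<noteq> 0 \<longrightarrow> q \<noteq> p \<longrightarrow> sqsub q p)"

lemma coords_leading_term_iff:
  assumes T: "\<forall>i\<in>{1..n}. reduction_operator (T i)" and c: "coords T n c w"
  shows "leading_index c (i, g) \<longleftrightarrow> w i \<noteq> 0 \<and> ltv (w i) = g \<and> (\<forall>j>i. w j = 0)"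
  unfolding leading_index_def
proof
  assume lead: "c (i, g) \<noteq> 0 \<and> (\<forall>p. c p \<noteq> 0 \<longrightarrow> p \<noteq> (i, g) \<longrightarrow> sqsub p (i, g))"
  then have "w i \<noteq> 0"
    using coords_component_ltv(2)[OF T c] by blast
  moreover have "Max {h. c (i, h) \<noteq> 0} = g"
  proof (rule Max_eqI)
    fix h
    assume "h \<in> {h. c (i, h) \<noteq> 0}"
    then show "h \<le> g"
    proof (cases "h = g")
      case False
      then have "sqsub (i, h) (i, g)"
        using lead \<open>h \<in> {h. c (i, h) \<noteq> 0}\<close> by blast
      then show ?thesis
        by (simp add: sqsub_def)
    qed simp
  qed (use lead coords_component_ltv(1)[OF T c] in auto)
  moreover have "w j = 0" if "i < j" for j
  proof -
    have "c (j, h) = 0" for h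
      using lead that by (metis fst_conv less_irrefl less_not_sym sqsub_def)
    then show ?thesis
      using coords_component_ltv(2)[OF T c, of j] by blast
  qed
  ultimately show "w i \<noteq> 0 \<and> ltv (w i) = g \<and> (\<forall>j>i. w j = 0)"
    using coords_component_ltv(3)[OF T c, of i] by simp
next
  assume lead: "w i \<noteq> 0 \<and> ltv (w i) = g \<and> (\<forall>j>i. w j = 0)"
  let ?S = "{h. c (i, h) \<noteq> 0}"
  have fin: "finite ?S"
    by (rule coords_component_ltv(1)[OF T c])
  have "?S \<noteq> {}" and g: "g = Max ?S"
    using lead coords_component_ltv(2,3)[OF T c, of i] by auto
  then have g_in: "g \<in> ?S" and le_g: "\<And>h. h \<in> ?S \<Longrightarrow> h \<le> g"
    unfolding g using Max_in[OF fin] Max_ge[OF fin] by simp_all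
  have "sqsub (j, h) (i, g)" if "c (j, h) \<noteq> 0" "(j, h) \<noteq> (i, g)" for j h
  proof -
    have "j \<le> i"
      using lead that(1) coords_component_ltv(2)[OF T c, of j] by (meson not_le)
    moreover have "h < g" if "j = i"
      using le_g[of h] \<open>c (j, h) \<noteq> 0\<close> \<open>(j, h) \<noteq> (i, g)\<close> that by fastforce
    ultimately show ?thesis
      by (auto simp: sqsub_def)
  qed
  with g_in show "c (i, g) \<noteq> 0 \<and> (\<forall>p. c p \<noteq> 0 \<longrightarrow> p \<noteq> (i, g) \<longrightarrow> sqsub p (i, g))"
    by auto
qed

lemma lt_syz_eq:
  assumes T: "\<forall>i\<in>{1..n}. reduction_operator (T i)"
  shows "lt_syz T n = {e_vec T i g | i g. \<exists>w\<in>syz T n. w i \<noteq> 0 \<and> ltv (w i) = g \<and> (\<forall>j>i. w j = 0)}"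
proof -
  have "(\<exists>w\<in>syz T n. (\<exists>j. w j \<noteq> 0) \<and> (\<exists>c. coords T n c w \<and> leading_index c (i, g)))
      \<longleftrightarrow> (\<exists>w\<in>syz T n. w i \<noteq> 0 \<and> ltv (w i) = g \<and> (\<forall>j>i. w j = 0))" for i g
  proof
    assume "\<exists>w\<in>syz T n. (\<exists>j. w j \<noteq> 0) \<and> (\<exists>c. coords T n c w \<and> leading_index c (i, g))"
    then obtain w c where "w \<in> syz T n" "coords T n c w" "leading_index c (i, g)"
      by blast
    then show "\<exists>w\<in>syz T n. w i \<noteq> 0 \<and> ltv (w i) = g \<and> (\<forall>j>i. w j = 0)"
      using coords_leading_term_iff[OF T] by blast
  next
    assume "\<exists>w\<in>syz T n. w i \<noteq> 0 \<and> ltv (w i) = g \<and> (\<forall>j>i. w j = 0)"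
    then obtain w where w: "w \<in> syz T n" "w i \<noteq> 0 \<and> ltv (w i) = g \<and> (\<forall>j>i. w j = 0)"
      by blast
    then obtain c where "coords T n c w"
      using coords_exist[OF T] unfolding syz_def by blast
    with w show "\<exists>w\<in>syz T n. (\<exists>j. w j \<noteq> 0) \<and> (\<exists>c. coords T n c w \<and> leading_index c (i, g))"
      using coords_leading_term_iff[OF T] by blast
  qed
  then show ?thesis
    unfolding lt_syz_def leading_index_def[symmetric] by (simp only:)
qed

lemma sum_atLeastAtMost_split_last:
  fixes w :: "nat \<Rightarrow> 'a::comm_monoid_add"
  assumes "1 \<le> i" "i \<le> n" and "\<And>j. i < j \<Longrightarrow> w j = 0"
  shows "(\<Sum>j\<in>{1..n}. w j) = w i + (\<Sum>j\<in>{1..i-1}. w j)"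
proof -
  have "(\<Sum>j\<in>{1..n}. w j) = (\<Sum>j\<in>{1..i}. w j)"
    using assms by (intro sum.mono_neutral_right) auto
  also have "{1..i} = insert i {1..i-1}"
    using assms(1) by auto
  finally show ?thesis
    using assms(1) by simp
qed

lemma syz_last_component:
  assumes T: "\<forall>i\<in>{1..n}. reduction_operator (T i)"
    and w: "w \<in> syz T n" "w i \<noteq> 0" "\<forall>j>i. w j = 0"
  shows "2 \<le> i \<and> i \<le> n \<and> w i \<in> sum_kernels T {1..i-1} \<inter> kernel (T i)"
proof -
  have ker: "w \<in> kerF T n" and sum_zero: "(\<Sum>j\<in>{1..n}. w j) = 0"
    using w(1) unfolding syz_def by blast+
  then have i: "i \<in> {1..n}"
    using w(2) unfolding kerF_def by blast
  then have "w i + (\<Sum>j\<in>{1..i-1}. w j) = 0"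
    using sum_zero w(3) sum_atLeastAtMost_split_last[of i n w] by simp
  then have w_i: "w i = (\<Sum>j\<in>{1..i-1}. - w j)"
    by (simp add: sum_negf add_eq_0_iff2)
  have "i \<noteq> 1"
    using w_i w(2) by auto
  moreover have "- w j \<in> kernel (T j)" if "j \<in> {1..i-1}" for j
  proof -
    have "j \<in> {1..n}"
      using that i by auto
    then have "reduction_operator (T j)" "w j \<in> kernel (T j)"
      using T ker unfolding kerF_def by blast+
    then show ?thesis
      using KG.subspace_neg[OF subspace_kernel[OF reduction_operator_linear]] by blast
  qed
  then have "w i \<in> sum_kernels T {1..i-1}"
    using w_i unfolding sum_kernels_def by (intro CollectI exI[of _ "\<lambda>j. - w j"]) blast
  moreover have "w i \<in> kernel (T i)"
    using ker i unfolding kerF_def by blast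
  ultimately show ?thesis
    using i by auto
qed

lemma syz_with_last_component:
  assumes T: "\<forall>i\<in>{1..n}. reduction_operator (T i)"
    and i: "2 \<le> i" "i \<le> n" and v: "v \<in> sum_kernels T {1..i-1} \<inter> kernel (T i)"
  obtains w where "w \<in> syz T n" "w i = v" "\<forall>j>i. w j = 0"
proof -
  obtain f where f: "\<forall>j\<in>{1..i-1}. f j \<in> kernel (T j)" "v = (\<Sum>j\<in>{1..i-1}. f j)"
    using v unfolding sum_kernels_def by blast
  define w where "w j = (if j = i then v else if j \<in> {1..i-1} then - f j else 0)" for j
  have w_lower: "w j = - f j" if "j \<in> {1..i-1}" for j
    using that by (auto simp: w_def)
  have w_upper: "w j = 0" if "j \<notin> {1..i}" for j
    using that i by (auto simp: w_def)
  have "w j \<in> kernel (T j)" if "j \<in> {1..n}" for j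
  proof -
    have "KG.subspace (kernel (T j))"
      using T that subspace_kernel[OF reduction_operator_linear] by blast
    consider "j = i" | "j \<in> {1..i-1}" | "j \<notin> {1..i}"
      by fastforce
    then show ?thesis
    proof cases
      case 1
      then show ?thesis
        using v by (simp add: w_def)
    next
      case 2
      then show ?thesis
        using w_lower f(1) KG.subspace_neg[OF \<open>KG.subspace (kernel (T j))\<close>] by simp
    qed (simp add: w_upper KG.subspace_0[OF \<open>KG.subspace (kernel (T j))\<close>])
  qed
  moreover have "w j = 0" if "j \<notin> {1..n}" for j
    using that i by (intro w_upper) auto
  ultimately have "w \<in> kerF T n"
    unfolding kerF_def by blast
  have w_i: "w i = v"
    by (simp add: w_def)
  have "(\<Sum>j\<in>{1..n}. w j) = w i + (\<Sum>j\<in>{1..i-1}. w j)"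
    using i w_upper by (intro sum_atLeastAtMost_split_last) auto
  also have "(\<Sum>j\<in>{1..i-1}. w j) = (\<Sum>j\<in>{1..i-1}. - f j)"
    by (rule sum.cong) (simp_all add: w_lower)
  also have "w i + (\<Sum>j\<in>{1..i-1}. - f j) = v - (\<Sum>j\<in>{1..i-1}. f j)"
    by (simp add: w_i sum_negf)
  finally have "(\<Sum>j\<in>{1..n}. w j) = 0"
    using f(2) by simp
  moreover have "\<forall>j>i. w j = 0"
    using w_upper by simp
  ultimately show ?thesis
    using that \<open>w \<in> kerF T n\<close> w_i unfolding syz_def by blast
qed

lemma syz_leading_component_iff:
  assumes T: "\<forall>i\<in>{1..n}. reduction_operator (T i)"
  shows "(\<exists>w\<in>syz T n. w i \<noteq> 0 \<and> ltv (w i) = g \<and> (\<forall>j>i. w j = 0))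
     \<longleftrightarrow> 2 \<le> i \<and> i \<le> n \<and> g \<in> lead_terms (sum_kernels T {1..i-1} \<inter> kernel (T i))"
proof
  assume "\<exists>w\<in>syz T n. w i \<noteq> 0 \<and> ltv (w i) = g \<and> (\<forall>j>i. w j = 0)"
  then obtain w where w: "w \<in> syz T n" "w i \<noteq> 0" "ltv (w i) = g" "\<forall>j>i. w j = 0"
    by blast
  then have "2 \<le> i \<and> i \<le> n \<and> w i \<in> sum_kernels T {1..i-1} \<inter> kernel (T i)"
    by (intro syz_last_component[OF T])
  with w(2,3) show "2 \<le> i \<and> i \<le> n \<and> g \<in> lead_terms (sum_kernels T {1..i-1} \<inter> kernel (T i))"
    unfolding lead_terms_def by blast
next
  assume "2 \<le> i \<and> i \<le> n \<and> g \<in> lead_terms (sum_kernels T {1..i-1} \<inter> kernel (T i))"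
  then obtain v where v: "v \<noteq> 0" "ltv v = g"
    and "2 \<le> i" "i \<le> n" "v \<in> sum_kernels T {1..i-1} \<inter> kernel (T i)"
    unfolding lead_terms_def by blast
  then obtain w where "w \<in> syz T n" "w i = v" "\<forall>j>i. w j = 0"
    using syz_with_last_component[OF T] by blast
  with v show "\<exists>w\<in>syz T n. w i \<noteq> 0 \<and> ltv (w i) = g \<and> (\<forall>j>i. w j = 0)"
    by blast
qed

theorem mainTheorem6:
  fixes T :: "nat \<Rightarrow> (('g::wellorder \<Rightarrow>\<^sub>0 'k::field) \<Rightarrow> ('g \<Rightarrow>\<^sub>0 'k))" and n :: nat
  assumes "\<forall>i\<in>{1..n}. reduction_operator (T i)"
  shows "lt_syz T n =
    {e_vec T i g0 | i g0. 2 \<le> i \<and> i \<le> n \<and> g0 \<in> red (join_op (meet_ops T {1..i-1}) (T i))}"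
proof -
  have red_join: "red (join_op (meet_ops T {1..i-1}) (T i))
      = lead_terms (sum_kernels T {1..i-1} \<inter> kernel (T i))" if "2 \<le> i" "i \<le> n" for i
    using that assms by (intro red_join_meet reduction_operator_linear) auto
  have "(\<exists>w\<in>syz T n. w i \<noteq> 0 \<and> ltv (w i) = g \<and> (\<forall>j>i. w j = 0))
      \<longleftrightarrow> 2 \<le> i \<and> i \<le> n \<and> g \<in> red (join_op (meet_ops T {1..i-1}) (T i))" for i g
  proof (cases "2 \<le> i \<and> i \<le> n")
    case True
    then show ?thesis
      using syz_leading_component_iff[OF assms, of i g] red_join[of i] by simp
  next
    case False
    then show ?thesis
      using syz_leading_component_iff[OF assms, of i g] by blast
  qed
  then show ?thesis
    unfolding lt_syz_eq[OF assms] by (simp only:)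
qed

end
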